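(* $\displaystyle\min_{\underline y\in\mathcal F}\sum_{j\in\tilde R}c_jy_j\le\min_{\underline x\in\mathcal F_0}\sum_{j\in\tilde R}c_jx_j$.
   Context: Let $G=(V,E)$ be a finite undirected graph with $V=Q\cup R\cup B$ (pairwise disjoint), where $Q$ is the set of sources, $R$ the set of potential relay locations and $B$ the set of potential sink locations; let $h_{\max}$ be a positive integer and $c_s,c_r\ge0$. Form the augmented graph $\tilde G=(\tilde V,\tilde E)$ with $\tilde V=V\cup\{0\}$, where $0$ is a new vertex (virtual sink), and $\tilde E=E\cup\{\{0,b\}:b\in B\}$. Let $\tilde R=R\cup B$ with node costs $c_j=c_r$ for $j\in R$ and $c_j=c_s$ for $j\in B$. For a source $k\in Q$, a node cut for $k$ is a set $\gamma\subseteq\tilde V\setminus\{k,0\}$ whose deletion disconnects $k$ from $0$ in $\tilde G$; it is minimal if no proper subset is a node cut; $\Gamma^k$ denotes the set of minimal node cuts for $k$. A vector $\underline y=((y_{j,k})_{k\in Q,\,j\in\tilde V\setminus\{k,0\}},(y_j)_{j\in\tilde R})$ belongs to $\mathcal F$ iff: (i) $\sum_{j\in\gamma}y_{j,k}\ge1$ for all $\gamma\in\Gamma^k$, $k\in Q$; (ii) $y_j\ge y_{j,k}$ for all $j\in\tilde R$, $k\in Q$; (iii) $\sum_{j\in\tilde V\setminus\{k,0\}}y_{j,k}\le h_{\max}$ for all $k\in Q$; (iv) all $y_{j,k},y_j\in\{0,1\}$. For $k\in Q$ let $\mathcal P'_k$ be the set of paths in $\tilde G$ from $k$ to $0$ with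 at most $h_{\max}+1$ edges, and let $\mathcal U_0$ be the set of tuples $\underline g=(p_k)_{k\in Q}$ with $p_k\in\mathcal P'_k$. For $\underline g\in\mathcal U_0$ define $\underline x(\underline g)$ by $x_{j,k}=1$ if $j$ is a vertex of $p_k$ and $0$ otherwise ($k\in Q$, $j\in\tilde V\setminus\{k,0\}$), and $x_j=1$ if $x_{j,k}=1$ for some $k\in Q$ and $0$ otherwise ($j\in\tilde R$). Let $\mathcal F_0=\{\underline x(\underline g):\underline g\in\mathcal U_0\}$. A minimum over an empty set is taken to be $+\infty$. (The right-hand side is the optimum cost of the multi-sink relay placement problem with hop bound $h_{\max}$; the left-hand side is the optimum of the node-cut ILP.) *)

theory Defs
  imports "HOL-Library.Extended_Real"
begin

text \<open>Augmented graph: vertices of type 'v option; Some v is an original vertex,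
  None is the virtual sink 0.  E is a set of 2-element vertex sets.\<close>

definition tV :: "'v set \<Rightarrow> 'v option set" where
  "tV V = insert None (Some ` V)"

definition tadj :: "'v set set \<Rightarrow> 'v set \<Rightarrow> 'v option \<Rightarrow> 'v option \<Rightarrow> bool" where
  "tadj E B u w \<longleftrightarrow>
     (\<exists>a b. u = Some a \<and> w = Some b \<and> {a, b} \<in> E)
   \<or> (u = None \<and> w \<in> Some ` B) \<or> (w = None \<and> u \<in> Some ` B)"

definition twalk :: "'v set \<Rightarrow> 'v set set \<Rightarrow> 'v set \<Rightarrow> 'v option list \<Rightarrow> bool" where
  "twalk V E B xs \<longleftrightarrow> xs \<noteq> [] \<and> set xs \<subseteq> tV V \<and>
     (\<forall>i. Suc i < length xs \<longrightarrow> tadj E B (xs ! i) (xs ! Suc i))"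

definition node_cut :: "'v set \<Rightarrow> 'v set set \<Rightarrow> 'v set \<Rightarrow> 'v \<Rightarrow> 'v option set \<Rightarrow> bool" where
  "node_cut V E B k \<gamma> \<longleftrightarrow> \<gamma> \<subseteq> tV V - {Some k, None} \<and>
     \<not> (\<exists>xs. twalk V E B xs \<and> hd xs = Some k \<and> last xs = None \<and> set xs \<inter> \<gamma> = {})"

definition min_node_cut :: "'v set \<Rightarrow> 'v set set \<Rightarrow> 'v set \<Rightarrow> 'v \<Rightarrow> 'v option set \<Rightarrow> bool" where
  "min_node_cut V E B k \<gamma> \<longleftrightarrow> node_cut V E B k \<gamma> \<and> (\<forall>\<gamma>'. \<gamma>' \<subset> \<gamma> \<longrightarrow> \<not> node_cut V E B k \<gamma>')"

definition tR :: "'v set \<Rightarrow> 'v set \<Rightarrow> 'v option set" where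
  "tR R B = Some ` (R \<union> B)"

definition node_cost :: "'v set \<Rightarrow> real \<Rightarrow> real \<Rightarrow> 'v option \<Rightarrow> real" where
  "node_cost R c_s c_r j = (if j \<in> Some ` R then c_r else c_s)"

text \<open>A vector y is a pair (y_{j,k}, y_j): ypair k j = y_{j,k}, ynode j = y_j.
  Entries outside the index sets are fixed to 0 (vectors are extensional).\<close>
type_synonym 'v yvec = "('v \<Rightarrow> 'v option \<Rightarrow> real) \<times> ('v option \<Rightarrow> real)"

definition feasF :: "'v set \<Rightarrow> 'v set set \<Rightarrow> 'v set \<Rightarrow> 'v set \<Rightarrow> 'v set \<Rightarrow> nat \<Rightarrow> 'v yvec set" where
  "feasF V E Q R B hmax = {(yp, yn).
     (\<forall>k j. (k \<notin> Q \<or> j \<notin> tV V - {Some k, None}) \<longrightarrow> yp k j = 0) \<and>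
     (\<forall>j. j \<notin> tR R B \<longrightarrow> yn j = 0) \<and>
     (\<forall>k\<in>Q. \<forall>\<gamma>. min_node_cut V E B k \<gamma> \<longrightarrow> (\<Sum>j\<in>\<gamma>. yp k j) \<ge> 1) \<and>
     (\<forall>j\<in>tR R B. \<forall>k\<in>Q. yn j \<ge> yp k j) \<and>
     (\<forall>k\<in>Q. (\<Sum>j\<in>tV V - {Some k, None}. yp k j) \<le> real hmax) \<and>
     (\<forall>k\<in>Q. \<forall>j\<in>tV V - {Some k, None}. yp k j \<in> {0, 1}) \<and>
     (\<forall>j\<in>tR R B. yn j \<in> {0, 1})}"

definition paths' :: "'v set \<Rightarrow> 'v set set \<Rightarrow> 'v set \<Rightarrow> nat \<Rightarrow> 'v \<Rightarrow> 'v option list set" where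
  "paths' V E B hmax k = {xs. twalk V E B xs \<and> distinct xs \<and> hd xs = Some k \<and> last xs = None
      \<and> length xs - 1 \<le> hmax + 1}"

definition U0 :: "'v set \<Rightarrow> 'v set set \<Rightarrow> 'v set \<Rightarrow> 'v set \<Rightarrow> nat \<Rightarrow> ('v \<Rightarrow> 'v option list) set" where
  "U0 V E Q B hmax = {g. \<forall>k\<in>Q. g k \<in> paths' V E B hmax k}"

definition xvec :: "'v set \<Rightarrow> 'v set \<Rightarrow> 'v set \<Rightarrow> 'v set \<Rightarrow> ('v \<Rightarrow> 'v option list) \<Rightarrow> 'v yvec" where
  "xvec V Q R B g =
     (let xp = (\<lambda>k j. if k \<in> Q \<and> j \<in> tV V - {Some k, None} \<and> j \<in> set (g k) then 1 else 0)
      in (xp, (\<lambda>j. if j \<in> tR R B \<and> (\<exists>k\<in>Q. xp k j = 1) then 1 else 0)))"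

definition feasF0 :: "'v set \<Rightarrow> 'v set set \<Rightarrow> 'v set \<Rightarrow> 'v set \<Rightarrow> 'v set \<Rightarrow> nat \<Rightarrow> 'v yvec set" where
  "feasF0 V E Q R B hmax = xvec V Q R B ` U0 V E Q B hmax"

definition cost :: "'v set \<Rightarrow> 'v set \<Rightarrow> real \<Rightarrow> real \<Rightarrow> 'v yvec \<Rightarrow> real" where
  "cost R B c_s c_r y = (\<Sum>j\<in>tR R B. node_cost R c_s c_r j * snd y j)"

end

theory Submission
  imports Defs
begin

text \<open>Every tuple of hop-bounded paths is a feasible point of the node-cut ILP: a path from \<open>k\<close>
  to \<open>0\<close> must pass through every node cut for \<open>k\<close>, and a simple path with at most
  \<open>hmax + 1\<close> edges has at most \<open>hmax\<close> interior vertices.  Minimising over the larger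
  feasible set can only give a smaller optimum.\<close>

lemma finite_tV: "finite V \<Longrightarrow> finite (tV V)"
  by (simp add: tV_def)

lemma card_interior_le:
  assumes "distinct xs" "xs \<noteq> []" "hd xs \<noteq> last xs" "length xs - 1 \<le> h + 1"
  shows "card (set xs - {hd xs, last xs}) \<le> h"
proof -
  have "card (set xs - {hd xs, last xs}) = card (set xs) - 2"
    using assms(2,3) by (subst card_Diff_subset) auto
  also have "\<dots> = length xs - 2"
    using assms(1) by (simp add: distinct_card)
  finally show ?thesis
    using assms(4) by linarith
qed

lemma node_cut_finite: "finite V \<Longrightarrow> node_cut V E B k \<gamma> \<Longrightarrow> finite \<gamma>"
  unfolding node_cut_def using finite_tV finite_subset by blast

lemma node_cut_meets_path:
  "node_cut V E B k \<gamma> \<Longrightarrow> p \<in> paths' V E B hmax k \<Longrightarrow> set p \<inter> \<gamma> \<noteq> {}"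
  unfolding node_cut_def paths'_def by blast

lemma paths'_card_interior_le:
  assumes "p \<in> paths' V E B hmax k"
  shows "card (set p - {Some k, None}) \<le> hmax"
proof -
  have "p \<noteq> []" "hd p = Some k" "last p = None"
    using assms unfolding paths'_def twalk_def by auto
  with assms show ?thesis
    unfolding paths'_def using card_interior_le[of p hmax] by auto
qed

lemma feasF0_subset_feasF:
  assumes "finite V"
  shows "feasF0 V E Q R B hmax \<subseteq> feasF V E Q R B hmax"
proof
  fix y assume "y \<in> feasF0 V E Q R B hmax"
  then obtain g where g: "\<And>k. k \<in> Q \<Longrightarrow> g k \<in> paths' V E B hmax k"
    and y: "y = xvec V Q R B g"
    unfolding feasF0_def U0_def by auto
  define xp where "xp k j = (if k \<in> Q \<and> j \<in> tV V - {Some k, None} \<and> j \<in> set (g k)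
    then 1 else (0::real))" for k j
  define xn where "xn j = (if j \<in> tR R B \<and> (\<exists>k\<in>Q. xp k j = 1) then 1 else (0::real))" for j
  have y_eq: "y = (xp, xn)"
    unfolding y xvec_def xp_def xn_def Let_def by simp
  have sum_xp: "(\<Sum>j\<in>A. xp k j) = real (card (A \<inter> set (g k)))"
    if "k \<in> Q" "A \<subseteq> tV V - {Some k, None}" for k A
  proof -
    have "finite A"
      using that(2) finite_tV[OF assms] finite_subset by blast
    moreover have "(\<Sum>j\<in>A. xp k j) = (\<Sum>j\<in>A. if j \<in> set (g k) then 1 else 0)"
      using that unfolding xp_def by (intro sum.cong) auto
    ultimately show ?thesis
      by (simp add: sum.If_cases)
  qed
  have cut_covered: "1 \<le> (\<Sum>j\<in>\<gamma>. xp k j)" if "k \<in> Q" "min_node_cut V E B k \<gamma>" for k \<gamma>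
  proof -
    have cut: "node_cut V E B k \<gamma>"
      using that(2) unfolding min_node_cut_def by blast
    then have "\<gamma> \<subseteq> tV V - {Some k, None}"
      unfolding node_cut_def by blast
    moreover have "0 < card (\<gamma> \<inter> set (g k))"
      using node_cut_meets_path[OF cut g[OF that(1)]] node_cut_finite[OF assms cut]
      by (simp add: card_gt_0_iff Int_commute)
    ultimately show ?thesis
      using sum_xp[OF that(1)] by (simp add: Suc_le_eq)
  qed
  have hop_bound: "(\<Sum>j\<in>tV V - {Some k, None}. xp k j) \<le> real hmax" if "k \<in> Q" for k
  proof -
    have "card ((tV V - {Some k, None}) \<inter> set (g k)) \<le> card (set (g k) - {Some k, None})"
      by (rule card_mono) auto
    also have "\<dots> \<le> hmax"
      using paths'_card_interior_le[OF g[OF that]] .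
    finally show ?thesis
      using sum_xp[OF that] by simp
  qed
  show "y \<in> feasF V E Q R B hmax"
    unfolding y_eq feasF_def using cut_covered hop_bound
    by (auto simp: xp_def xn_def)
qed

theorem corollary2:
  fixes V Q R B :: "'v set" and E :: "'v set set" and hmax :: nat and c_s c_r :: real
  assumes "finite V"
    and "V = Q \<union> R \<union> B" and "Q \<inter> R = {}" and "Q \<inter> B = {}" and "R \<inter> B = {}"
    and "\<forall>e\<in>E. \<exists>a b. a \<noteq> b \<and> a \<in> V \<and> b \<in> V \<and> e = {a, b}"
    and "hmax > 0" and "c_s \<ge> 0" and "c_r \<ge> 0"
  shows "(INF y\<in>feasF V E Q R B hmax. ereal (cost R B c_s c_r y))
           \<le> (INF x\<in>feasF0 V E Q R B hmax. ereal (cost R B c_s c_r x))"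
  using feasF0_subset_feasF[OF assms(1)] by (rule INF_superset_mono) simp

end
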